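(* Suppose $\alpha$ is such that (H1) holds. Then there exists $z_{\min}$ in the interior of $I$ such that $\alpha'(z)<0$ on $[a,z_{\min})$, $\alpha'(z_{\min})=0$ and $\alpha'(z)>0$ on $(z_{\min},b]$; moreover, for every $z_2\in[a,b]$, $\partial_{z_1}\lambda(z,z_2)<0$ for $z\in[a,z_{\min})$, $\partial_{z_1}\lambda(z_{\min},z_2)=0$, and $\partial_{z_1}\lambda(z,z_2)>0$ for $z\in(z_{\min},b]$.
   Context: Let $D\subset\mathbb R^N$ be a bounded smooth domain, outward normal $\nu$; $I=(a,b)$; $m\in C^\beta(\bar D)$ positive nonconstant; $\alpha:\bar I\to(0,\infty)$ smooth. For $\alpha_1,\alpha_2>0$ let $\Theta_{\alpha_2}$ be the unique positive solution of $\alpha_2\Delta\Theta+(m-\Theta)\Theta=0$ in $D$, $\partial_\nu\Theta=0$, and $\Lambda(\alpha_1,\alpha_2)$ the smallest eigenvalue of $\alpha_1\Delta\Phi+(m-\Theta_{\alpha_2})\Phi+\Lambda\Phi=0$ in $D$, $\partial_\nu\Phi=0$; it is known that $\Lambda$ is smooth on $(0,\infty)^2$ and $\partial_{\alpha_1}\Lambda>0$. Set $\lambda(z_1,z_2)=\Lambda(\alpha(z_1),\alpha(z_2))$. (H1): there is $K_\lambda>0$ with $2K_\lambda\le\partial^2_{z_1}\lambda(z_1,z_2)\le2/K_\lambda$ on $I\times I$, and $\partial_{z_1}\lambda(a,a)<0$, $\partial_{z_1}\lambda(b,b)>0$. *)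

theory Defs
  imports "HOL-Analysis.Analysis"
begin

text \<open>C-infinity on an open set S of a Euclidean space: there is a family of
  continuous functions containing f and closed under taking partial derivatives
  along every basis direction (so all iterated partial derivatives exist and are
  continuous on S).\<close>
definition smooth_on :: "'a::euclidean_space set \<Rightarrow> ('a \<Rightarrow> real) \<Rightarrow> bool" where
  "smooth_on S f \<longleftrightarrow>
     (\<exists>P. f \<in> P \<and>
        (\<forall>g\<in>P. continuous_on S g \<and>
           (\<forall>i\<in>Basis. \<exists>g'\<in>P. \<forall>x\<in>S.
               ((\<lambda>t. g (x + t *\<^sub>R i)) has_real_derivative g' x) (at 0))))"

definition smooth_on_interval :: "real \<Rightarrow> real \<Rightarrow> (real \<Rightarrow> real) \<Rightarrow> bool" where
  "smooth_on_interval a b f \<longleftrightarrow>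
     (\<exists>P. f \<in> P \<and>
        (\<forall>g\<in>P. \<exists>g'\<in>P. \<forall>x\<in>{a..b}. (g has_real_derivative g' x) (at x within {a..b})))"

definition dI :: "real \<Rightarrow> real \<Rightarrow> (real \<Rightarrow> real) \<Rightarrow> real \<Rightarrow> real" where
  "dI a b f x = vector_derivative f (at x within {a..b})"

end

theory Submission
  imports Defs
begin

text \<open>By the chain rule, \<open>\<partial>\<^sub>z\<^sub>1\<lambda>(z, z\<^sub>2) = \<partial>\<^sub>1\<Lambda>(\<alpha> z, \<alpha> z\<^sub>2) \<alpha>'(z)\<close> with
  \<open>\<partial>\<^sub>1\<Lambda> > 0\<close>, so for every \<open>z\<^sub>2\<close> this derivative has the sign of \<open>\<alpha>'(z)\<close>.
  Fixing any interior \<open>z\<^sub>2\<close>, convexity (H1) makes \<open>z \<mapsto> \<partial>\<^sub>z\<^sub>1\<lambda>(z, z\<^sub>2)\<close> strictly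
  increasing; it is negative at \<open>a\<close> and positive at \<open>b\<close> because its sign agrees with the one
  of \<open>\<partial>\<^sub>z\<^sub>1\<lambda>(a, a)\<close> and \<open>\<partial>\<^sub>z\<^sub>1\<lambda>(b, b)\<close>. Its unique zero is \<open>z\<^sub>m\<^sub>i\<^sub>n\<close>.
  Only the lower bound \<open>2K\<close> of (H1) is needed.\<close>

lemma has_real_derivative_fst_direction:
  fixes g :: "real \<times> real \<Rightarrow> real"
  assumes "((\<lambda>t. g (x + t *\<^sub>R (1, 0))) has_real_derivative d) (at 0)"
  shows "((\<lambda>s. g (s, snd x)) has_real_derivative d) (at (fst x))"
proof -
  have "(\<lambda>t. g (x + t *\<^sub>R (1, 0))) = (\<lambda>t. g (t + fst x, snd x))"
    by (cases x) (simp add: add.commute)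
  with assms show ?thesis
    using DERIV_shift[of "\<lambda>s. g (s, snd x)" d 0 "fst x"] by simp
qed

lemma smooth_on_partial_fst:
  fixes f :: "real \<Rightarrow> real \<Rightarrow> real"
  assumes "smooth_on S (\<lambda>p. f (fst p) (snd p))"
  obtains f1 f11 :: "real \<Rightarrow> real \<Rightarrow> real" where
    "\<And>s y. (s, y) \<in> S \<Longrightarrow> ((\<lambda>s. f s y) has_real_derivative f1 s y) (at s)"
    "\<And>s y. (s, y) \<in> S \<Longrightarrow> ((\<lambda>s. f1 s y) has_real_derivative f11 s y) (at s)"
proof -
  have e1: "(1::real, 0::real) \<in> Basis"
    by (simp add: Basis_prod_def)
  obtain P where "(\<lambda>p. f (fst p) (snd p)) \<in> P" and P: "\<forall>g\<in>P. \<forall>i\<in>Basis. \<exists>g'\<in>P. \<forall>x\<in>S.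
      ((\<lambda>t. g (x + t *\<^sub>R i)) has_real_derivative g' x) (at 0)"
    using assms unfolding smooth_on_def by blast
  then obtain g1 where "g1 \<in> P" and g1: "\<forall>x\<in>S.
      ((\<lambda>t. f (fst (x + t *\<^sub>R (1, 0))) (snd (x + t *\<^sub>R (1, 0)))) has_real_derivative g1 x) (at 0)"
    using e1 by fastforce
  then obtain g11 where g11: "\<forall>x\<in>S. ((\<lambda>t. g1 (x + t *\<^sub>R (1, 0))) has_real_derivative g11 x) (at 0)"
    using P e1 by blast
  show thesis
  proof (rule that[of "\<lambda>s y. g1 (s, y)" "\<lambda>s y. g11 (s, y)"])
    fix s y assume "(s, y) \<in> S"
    then show "((\<lambda>s. f s y) has_real_derivative g1 (s, y)) (at s)"
      and "((\<lambda>s. g1 (s, y)) has_real_derivative g11 (s, y)) (at s)"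
      using has_real_derivative_fst_direction[of "\<lambda>p. f (fst p) (snd p)" "(s, y)"]
        has_real_derivative_fst_direction[of g1 "(s, y)"] g1 g11 by auto
  qed
qed

lemma smooth_on_interval_second_derivative:
  assumes "smooth_on_interval a b f"
  obtains f' f'' where
    "\<And>x. x \<in> {a..b} \<Longrightarrow> (f has_real_derivative f' x) (at x within {a..b})"
    "\<And>x. x \<in> {a..b} \<Longrightarrow> (f' has_real_derivative f'' x) (at x within {a..b})"
  using assms unfolding smooth_on_interval_def by metis

lemma dI_eqI:
  assumes "a < b" "x \<in> {a..b}" "(f has_real_derivative d) (at x within {a..b})"
  shows "dI a b f x = d"
  using vector_derivative_within_closed_interval[OF assms(1,2)] assms(3)
  by (simp add: dI_def has_real_derivative_iff_has_vector_derivative)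

lemma dI_eqI_cong:
  assumes "a < b" "x \<in> {a..b}" "\<And>y. y \<in> {a..b} \<Longrightarrow> f y = g y"
    and "(g has_real_derivative d) (at x within {a..b})"
  shows "dI a b f x = d"
  using assms by (intro dI_eqI has_field_derivative_transform_within[OF assms(4) zero_less_one]) auto

lemma dI_comp:
  assumes "a < b" "x \<in> {a..b}" "(g has_real_derivative g') (at x within {a..b})"
    and "(f has_real_derivative f') (at (g x))"
  shows "dI a b (\<lambda>y. f (g y)) x = f' * g'"
  using dI_eqI[OF assms(1,2) DERIV_chain2[OF assms(4,3)]] .

lemma sgn_eq_imp_same_sign:
  fixes u v :: real
  assumes "sgn u = sgn v"
  shows "(u < 0 \<longleftrightarrow> v < 0) \<and> (u = 0 \<longleftrightarrow> v = 0) \<and> (0 < u \<longleftrightarrow> 0 < v)"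
  using assms by (metis sgn_less sgn_greater sgn_0_0)

lemma strict_mono_on_if_deriv_pos:
  fixes h :: "real \<Rightarrow> real"
  assumes "continuous_on {a..b} h"
    and "\<And>x. x \<in> {a<..<b} \<Longrightarrow> (h has_real_derivative h' x) (at x)"
    and "\<And>x. x \<in> {a<..<b} \<Longrightarrow> 0 < h' x"
  shows "strict_mono_on {a..b} h"
proof (rule strict_mono_onI)
  fix x y assume xy: "x \<in> {a..b}" "y \<in> {a..b}" "x < y"
  show "h x < h y"
  proof (rule DERIV_pos_imp_increasing_open[OF \<open>x < y\<close>])
    fix t assume "x < t" "t < y"
    with xy have "t \<in> {a<..<b}"
      by auto
    then show "\<exists>l. (h has_real_derivative l) (at t) \<and> 0 < l"
      using assms(2,3) by blast
  next
    show "continuous_on {x..y} h"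
      by (rule continuous_on_subset[OF assms(1)]) (use xy in auto)
  qed
qed

lemma strict_mono_on_sign_crossing:
  fixes h :: "real \<Rightarrow> real"
  assumes "a \<le> b" "continuous_on {a..b} h" "strict_mono_on {a..b} h" "h a < 0" "0 < h b"
  obtains z where "z \<in> {a<..<b}" "\<And>x. x \<in> {a..b} \<Longrightarrow> sgn (h x) = sgn (x - z)"
proof -
  obtain z where z: "a \<le> z" "z \<le> b" "h z = 0"
    using IVT'[of h a 0 b] assms by auto
  with assms(4,5) have "z \<in> {a<..<b}"
    by (auto simp: less_le)
  moreover have "sgn (h x) = sgn (x - z)" if "x \<in> {a..b}" for x
    using strict_mono_onD[OF assms(3), of x z] strict_mono_onD[OF assms(3), of z x] z that
    by (cases x z rule: linorder_cases) auto
  ultimately show thesis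
    using that by blast
qed

lemma has_derivative_pos_sign_crossing:
  fixes h :: "real \<Rightarrow> real"
  assumes "a < b"
    and deriv: "\<And>x. x \<in> {a..b} \<Longrightarrow> (h has_real_derivative h' x) (at x within {a..b})"
    and "\<And>x. x \<in> {a<..<b} \<Longrightarrow> 0 < h' x" "h a < 0" "0 < h b"
  obtains z where "z \<in> {a<..<b}" "\<And>x. x \<in> {a..b} \<Longrightarrow> sgn (h x) = sgn (x - z)"
proof (rule strict_mono_on_sign_crossing)
  show cont: "continuous_on {a..b} h"
    using deriv DERIV_continuous continuous_on_eq_continuous_within by blast
  show "strict_mono_on {a..b} h"
  proof (rule strict_mono_on_if_deriv_pos[OF cont])
    fix x assume "x \<in> {a<..<b}"
    then show "(h has_real_derivative h' x) (at x)" "0 < h' x"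
      using deriv[of x] assms(3) at_within_Icc_at[of a x b] by auto
  qed
qed (use assms in auto)

theorem lemma6p1:
  fixes a b :: real and \<alpha> :: "real \<Rightarrow> real" and \<Lambda> :: "real \<Rightarrow> real \<Rightarrow> real"
    and K :: real
  assumes ab: "a < b"
    and \<alpha>_smooth: "smooth_on_interval a b \<alpha>"
    and \<alpha>_pos: "\<forall>z\<in>{a..b}. \<alpha> z > 0"
    and \<Lambda>_smooth: "smooth_on {p::real\<times>real. 0 < fst p \<and> 0 < snd p} (\<lambda>p. \<Lambda> (fst p) (snd p))"
    and \<Lambda>_mono: "\<forall>x>0. \<forall>y>0. deriv (\<lambda>s. \<Lambda> s y) x > 0"
    and K_pos: "K > 0"
    and H1_conv: "\<forall>z1\<in>{a<..<b}. \<forall>z2\<in>{a<..<b}.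
        2 * K \<le> dI a b (\<lambda>z. dI a b (\<lambda>w. \<Lambda> (\<alpha> w) (\<alpha> z2)) z) z1 \<and>
        dI a b (\<lambda>z. dI a b (\<lambda>w. \<Lambda> (\<alpha> w) (\<alpha> z2)) z) z1 \<le> 2 / K"
    and H1_a: "dI a b (\<lambda>w. \<Lambda> (\<alpha> w) (\<alpha> a)) a < 0"
    and H1_b: "dI a b (\<lambda>w. \<Lambda> (\<alpha> w) (\<alpha> b)) b > 0"
  shows "\<exists>zmin\<in>{a<..<b}.
     (\<forall>z\<in>{a..<zmin}. dI a b \<alpha> z < 0) \<and> dI a b \<alpha> zmin = 0 \<and>
     (\<forall>z\<in>{zmin<..b}. dI a b \<alpha> z > 0) \<and>
     (\<forall>z2\<in>{a..b}.
        (\<forall>z\<in>{a..<zmin}. dI a b (\<lambda>w. \<Lambda> (\<alpha> w) (\<alpha> z2)) z < 0) \<and>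
        dI a b (\<lambda>w. \<Lambda> (\<alpha> w) (\<alpha> z2)) zmin = 0 \<and>
        (\<forall>z\<in>{zmin<..b}. dI a b (\<lambda>w. \<Lambda> (\<alpha> w) (\<alpha> z2)) z > 0))"
proof -
  obtain \<Lambda>1 \<Lambda>11 :: "real \<Rightarrow> real \<Rightarrow> real" where
    d\<Lambda>: "\<And>s y. 0 < s \<Longrightarrow> 0 < y \<Longrightarrow> ((\<lambda>s. \<Lambda> s y) has_real_derivative \<Lambda>1 s y) (at s)" and
    d\<Lambda>1: "\<And>s y. 0 < s \<Longrightarrow> 0 < y \<Longrightarrow> ((\<lambda>s. \<Lambda>1 s y) has_real_derivative \<Lambda>11 s y) (at s)"
    by (rule smooth_on_partial_fst[OF \<Lambda>_smooth]) (simp, blast)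
  have \<Lambda>1_pos: "0 < \<Lambda>1 s y" if "0 < s" "0 < y" for s y
    using \<Lambda>_mono that DERIV_imp_deriv[OF d\<Lambda>[OF that]] by metis
  obtain \<alpha>1 \<alpha>2 where
    d\<alpha>: "\<And>z. z \<in> {a..b} \<Longrightarrow> (\<alpha> has_real_derivative \<alpha>1 z) (at z within {a..b})" and
    d\<alpha>1: "\<And>z. z \<in> {a..b} \<Longrightarrow> (\<alpha>1 has_real_derivative \<alpha>2 z) (at z within {a..b})"
    using smooth_on_interval_second_derivative[OF \<alpha>_smooth] by blast
  define dlam where "dlam z y = \<Lambda>1 (\<alpha> z) y * \<alpha>1 z" for z y
  have dI_\<Lambda>: "dI a b (\<lambda>w. \<Lambda> (\<alpha> w) y) z = dlam z y" if "0 < y" "z \<in> {a..b}" for y z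
    using dI_comp[OF ab \<open>z \<in> {a..b}\<close> d\<alpha> d\<Lambda>] \<alpha>_pos that by (simp add: dlam_def)
  have sgn_dlam: "sgn (dlam z y) = sgn (\<alpha>1 z)" if "0 < y" "z \<in> {a..b}" for y z
    using \<Lambda>1_pos \<alpha>_pos that by (simp add: dlam_def sgn_mult)
  define m where "m = (a + b) / 2"
  have m: "m \<in> {a<..<b}" "0 < \<alpha> m"
    using ab \<alpha>_pos by (auto simp: m_def)
  define h' where "h' z = \<Lambda>11 (\<alpha> z) (\<alpha> m) * \<alpha>1 z * \<alpha>1 z + \<Lambda>1 (\<alpha> z) (\<alpha> m) * \<alpha>2 z" for z
  have d_dlam: "((\<lambda>z. dlam z (\<alpha> m)) has_real_derivative h' z) (at z within {a..b})"
    if "z \<in> {a..b}" for z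
    unfolding dlam_def h'_def
    using DERIV_mult[OF DERIV_chain2[OF d\<Lambda>1 d\<alpha>] d\<alpha>1] \<alpha>_pos m that by (simp add: mult.commute)
  have h'_pos: "0 < h' z" if "z \<in> {a<..<b}" for z
  proof -
    have z: "z \<in> {a..b}"
      using that by auto
    have "dI a b (\<lambda>z. dI a b (\<lambda>w. \<Lambda> (\<alpha> w) (\<alpha> m)) z) z = h' z"
      using dI_eqI_cong[OF ab z dI_\<Lambda>[OF m(2)] d_dlam[OF z]] .
    then show ?thesis
      using H1_conv K_pos m that by force
  qed
  have "dlam a (\<alpha> a) < 0" "0 < dlam b (\<alpha> b)"
    using H1_a H1_b dI_\<Lambda> \<alpha>_pos ab by auto
  moreover have "sgn (dlam a (\<alpha> m)) = sgn (dlam a (\<alpha> a))" "sgn (dlam b (\<alpha> m)) = sgn (dlam b (\<alpha> b))"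
    using sgn_dlam \<alpha>_pos m ab by auto
  ultimately have dlam_ends: "dlam a (\<alpha> m) < 0" "0 < dlam b (\<alpha> m)"
    using sgn_eq_imp_same_sign by blast+
  obtain zmin where zmin: "zmin \<in> {a<..<b}"
    and sgn_zmin: "\<And>z. z \<in> {a..b} \<Longrightarrow> sgn (dlam z (\<alpha> m)) = sgn (z - zmin)"
    using has_derivative_pos_sign_crossing[OF ab d_dlam h'_pos dlam_ends] by blast
  have sgn_dI_\<alpha>: "sgn (dI a b \<alpha> z) = sgn (z - zmin)" if "z \<in> {a..b}" for z
    using that sgn_zmin sgn_dlam[OF m(2)] dI_eqI[OF ab that d\<alpha>] by simp
  have sgn_dI_\<Lambda>: "sgn (dI a b (\<lambda>w. \<Lambda> (\<alpha> w) (\<alpha> z2)) z) = sgn (z - zmin)"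
    if "z \<in> {a..b}" "z2 \<in> {a..b}" for z z2
    using that sgn_zmin sgn_dlam m(2) dI_\<Lambda> \<alpha>_pos by simp
  show ?thesis
    using zmin sgn_eq_imp_same_sign[OF sgn_dI_\<alpha>] sgn_eq_imp_same_sign[OF sgn_dI_\<Lambda>]
    by (intro bexI[OF _ zmin]) auto
qed

end
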